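(* Let $A\in\mathbb R^{m\times n}$, and let $\omega:\mathbb R^m\to\mathbb R$ be convex (finite everywhere) and globally $K_\omega$-Lipschitz continuous. Fix $y\in\mathbb R^n$ and $\lambda>0$ and define $$\Phi_\lambda(u)=\omega(Au)+\frac1{2\lambda}\|u-y\|^2\ (u\in\mathbb R^n),\qquad \Psi_\lambda(v)=\frac1{2\lambda}\|\lambda A^\top v-y\|^2+\omega^\star(v)-\frac1{2\lambda}\|y\|^2\ (v\in\mathbb R^m).$$ Let $\bar v$ be a minimizer of $\Psi_\lambda$, let $(v_j)_{j\ge0}\subseteq\mathbb R^m$ satisfy $\lim_{j\to\infty}\Psi_\lambda(v_j)=\Psi_\lambda(\bar v)$, and set $z_j=y-\lambda A^\top v_j$ and $\bar z=y-\lambda A^\top\bar v$. Then: (i) $\bar z$ is a minimizer of $\Phi_\lambda$; (ii) $\Psi_\lambda(v_j)-\Psi_\lambda(\bar v)\ge\frac1{2\lambda}\|z_j-\bar z\|^2$ for all $j$, and consequently $z_j\to\bar z$; (iii) for all $j$, $$\Phi_\lambda(z_j)-\Phi_\lambda(\bar z)\le\sqrt{\Psi_\lambda(v_j)-\Psi_\lambda(\bar v)}\Big(2\sqrt{2\lambda}\,K_\omega\|A\|+\sqrt{\Psi_\lambda(v_j)-\Psi_\lambda(\bar v)}\Big).$$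
   Context: $\omega^\star(v)=\sup_{z\in\mathbb R^m}\{\langle z,v\rangle-\omega(z)\}$ is the Fenchel conjugate; $\|A\|$ is the operator (spectral) norm. *)

theory Defs
  imports "HOL-Analysis.Analysis"
begin

definition fconj :: "(real^'m \<Rightarrow> real) \<Rightarrow> real^'m \<Rightarrow> ereal" where
  "fconj \<omega> v = (SUP z. ereal (inner z v - \<omega> z))"

definition PhiL :: "real^'n^'m \<Rightarrow> (real^'m \<Rightarrow> real) \<Rightarrow> real^'n \<Rightarrow> real \<Rightarrow> real^'n \<Rightarrow> real" where
  "PhiL A \<omega> y lam u = \<omega> (A *v u) + (1 / (2*lam)) * (norm (u - y))^2"

definition PsiL :: "real^'n^'m \<Rightarrow> (real^'m \<Rightarrow> real) \<Rightarrow> real^'n \<Rightarrow> real \<Rightarrow> real^'m \<Rightarrow> ereal" where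
  "PsiL A \<omega> y lam v = ereal ((1 / (2*lam)) * (norm (lam *\<^sub>R (transpose A *v v) - y))^2)
      + fconj \<omega> v - ereal ((1 / (2*lam)) * (norm y)^2)"

end

theory Submission
  imports Defs
begin

(* For every u and every v with finite conjugate, writing z(v) = y - lam A^T v,
     Phi u + Psi v = |u - z(v)|^2 / (2 lam) + (omega(A u) + omega*(v) - <A u, v>),
   and the last bracket is nonnegative by Fenchel-Young.  At a minimiser vbar of Psi
   the bracket vanishes for u = z(vbar): perturbing vbar along segments gives a
   variational inequality which, combined with omega = omega** (separation of the
   closed convex epigraph), forces equality in Fenchel-Young at A z(vbar).  Hence
   Phi (z vbar) = - Psi vbar, which yields (i) and (ii).  Moreover vbar is then a
   subgradient of omega at A z(vbar), so |vbar| <= K, and (iii) follows from (ii). *)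

lemma convex_on_affine_minorant_approx:
  fixes f :: "'a::euclidean_space \<Rightarrow> real"
  assumes conv: "convex_on UNIV f" and cont: "continuous_on UNIV f" and e: "e > 0"
  shows "\<exists>w c. (\<forall>z. c + inner w z \<le> f z) \<and> f x - e < c + inner w x"
proof -
  let ?S = "epigraph UNIV f"
  have "convex ?S" using conv by (rule convex_epigraphI)
  moreover have "closed ?S"
  proof -
    have "?S = {p. f (fst p) - snd p \<le> 0}" by (auto simp: epigraph_def)
    moreover have "closed {p. f (fst p) - snd p \<le> (0::real)}"
      by (rule closed_Collect_le) (auto intro!: continuous_intros continuous_on_compose2[OF cont])
    ultimately show ?thesis by simp
  qed
  moreover have "(x, f x - e) \<notin> ?S" using e by (auto simp: epigraph_def)
  ultimately obtain a b where ab: "inner a (x, f x - e) < b" "\<forall>p\<in>?S. inner a p > b"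
    using separating_hyperplane_closed_point by blast
  obtain a1 a2 where a: "a = (a1, a2)" by (cases a)
  have below: "inner a1 x + a2 * (f x - e) < b" using ab(1) a by (simp add: inner_Pair)
  have above: "inner a1 z + a2 * t > b" if "f z \<le> t" for z t
    using ab(2) a that by (auto simp: epigraph_def inner_Pair)
  have "a2 * e > 0" using below above[of x "f x"] by (simp add: algebra_simps)
  then have a2: "a2 > 0" using e by (simp add: zero_less_mult_iff)
  show ?thesis
  proof (intro exI conjI allI)
    fix z
    have "b / a2 - inner a1 z / a2 < f z" using above[of z "f z"] a2 by (simp add: field_simps)
    then show "b / a2 + inner (- (1/a2) *\<^sub>R a1) z \<le> f z" by simp
  next
    have "f x - e < b / a2 - inner a1 x / a2" using below a2 by (simp add: field_simps)
    then show "f x - e < b / a2 + inner (- (1/a2) *\<^sub>R a1) x" by simp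
  qed
qed

lemma nonpos_if_mult_le_square:
  fixes g C :: real
  assumes "\<And>t. 0 < t \<Longrightarrow> t \<le> 1 \<Longrightarrow> t * g \<le> t^2 * C"
  shows "g \<le> 0"
proof (rule ccontr)
  assume "\<not> g \<le> 0"
  define t where "t = min 1 (g / (\<bar>C\<bar> + 1))"
  have t: "0 < t" "t \<le> 1" unfolding t_def using \<open>\<not> g \<le> 0\<close> by auto
  have "g \<le> t * C" using assms[OF t] t by (simp add: power2_eq_square)
  also have "\<dots> \<le> t * \<bar>C\<bar>" using t by (simp add: mult_left_mono)
  also have "\<dots> \<le> g / (\<bar>C\<bar> + 1) * \<bar>C\<bar>" unfolding t_def by (intro mult_right_mono) auto
  also have "\<dots> < g" using \<open>\<not> g \<le> 0\<close> by (simp add: field_simps)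
  finally show False by simp
qed

lemma lipschitz_subgradient_norm_le:
  fixes f :: "'a::real_inner \<Rightarrow> real"
  assumes lip: "K-lipschitz_on UNIV f" and subgrad: "\<And>x'. f x + inner (x' - x) g \<le> f x'"
  shows "norm g \<le> K"
proof (cases "g = 0")
  case True
  then show ?thesis using lipschitz_on_nonneg[OF lip] by simp
next
  case False
  have "(norm g)^2 \<le> f (x + g) - f x" using subgrad[of "x + g"] by (simp add: power2_norm_eq_inner)
  also have "\<dots> \<le> K * norm g"
    using lipschitz_onD[OF lip, of "x + g" x] by (simp add: dist_norm dist_real_def)
  finally show ?thesis using False by (simp add: power2_eq_square)
qed

lemma LIMSEQ_if_ereal_excess_ge_square:
  fixes f :: "nat \<Rightarrow> ereal" and x :: "nat \<Rightarrow> 'a::real_normed_vector"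
  assumes lim: "f \<longlonglongrightarrow> ereal p" and c: "c > 0"
    and excess: "\<And>j. ereal (c * (norm (x j - x0))^2) \<le> f j - ereal p"
  shows "x \<longlonglongrightarrow> x0"
proof (rule tendstoI)
  fix e :: real assume e: "0 < e"
  have "ereal p < ereal (p + c * e^2)" using c e by simp
  from order_tendstoD(2)[OF lim this]
  show "\<forall>\<^sub>F j in sequentially. dist (x j) x0 < e"
  proof (rule eventually_mono)
    fix j assume "f j < ereal (p + c * e^2)"
    then have "c * (norm (x j - x0))^2 < c * e^2"
      using excess[of j] by (cases "f j") auto
    then have "(norm (x j - x0))^2 < e^2" using c by simp
    then show "dist (x j) x0 < e" using e by (simp add: dist_norm power_less_imp_less_base)
  qed
qed

lemma fenchel_young: "ereal (inner z v - \<omega> z) \<le> fconj \<omega> v"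
  unfolding fconj_def by (rule SUP_upper) auto

lemma fconj_leI: "(\<And>z. inner z v - \<omega> z \<le> c) \<Longrightarrow> fconj \<omega> v \<le> ereal c"
  unfolding fconj_def by (rule SUP_least) auto

lemma fconj_neq_minf: "fconj \<omega> v \<noteq> -\<infinity>"
  using fenchel_young[of 0 v \<omega>] by auto

lemma fconj_le_ereal_E:
  assumes "fconj \<omega> v \<le> ereal c"
  obtains b where "fconj \<omega> v = ereal b" "b \<le> c"
  using assms fconj_neq_minf[of \<omega> v] by (cases "fconj \<omega> v") auto

lemma fconj_convex_combination:
  assumes "fconj \<omega> a = ereal p" "fconj \<omega> b = ereal q" "0 \<le> t" "t \<le> 1"
  shows "fconj \<omega> ((1 - t) *\<^sub>R a + t *\<^sub>R b) \<le> ereal ((1 - t) * p + t * q)"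
proof (rule fconj_leI)
  fix z
  have "inner z ((1 - t) *\<^sub>R a + t *\<^sub>R b) - \<omega> z
      = (1 - t) * (inner z a - \<omega> z) + t * (inner z b - \<omega> z)"
    by (simp add: inner_simps algebra_simps)
  also have "\<dots> \<le> (1 - t) * p + t * q"
    using fenchel_young[of z a \<omega>] fenchel_young[of z b \<omega>] assms
    by (intro add_mono mult_left_mono) auto
  finally show "inner z ((1 - t) *\<^sub>R a + t *\<^sub>R b) - \<omega> z \<le> (1 - t) * p + t * q" .
qed

lemma fconj_eq_imp_subgradient:
  assumes "fconj \<omega> v = ereal (inner x v - \<omega> x)"
  shows "\<omega> x + inner (x' - x) v \<le> \<omega> x'"
  using fenchel_young[of x' v \<omega>] assms by (simp add: inner_diff_left)

lemma fconj_biconjugate_approx: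
  assumes "convex_on UNIV \<omega>" "continuous_on UNIV \<omega>" "e > 0"
  shows "\<exists>w. fconj \<omega> w \<le> ereal (inner x w - \<omega> x + e)"
proof -
  obtain w c where minorant: "\<And>z. c + inner w z \<le> \<omega> z" and close: "\<omega> x - e < c + inner w x"
    using convex_on_affine_minorant_approx[OF assms, of x] by blast
  have "fconj \<omega> w \<le> ereal (- c)"
    using minorant by (intro fconj_leI) (simp add: inner_commute algebra_simps)
  also have "\<dots> \<le> ereal (inner x w - \<omega> x + e)" using close by (simp add: inner_commute)
  finally show ?thesis ..
qed

lemma inner_matrix_vector_transpose:
  fixes A :: "real^'n^'m"
  shows "inner (A *v u) w = inner u (transpose A *v w)"
  by (metis dot_lmul_matrix inner_commute transpose_matrix_vector)

locale prox_duality =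
  fixes A :: "real^'n^'m" and \<omega> :: "real^'m \<Rightarrow> real" and y :: "real^'n" and lam :: real
  assumes convex: "convex_on UNIV \<omega>" and continuous: "continuous_on UNIV \<omega>"
    and lam_pos: "lam > 0"
begin

abbreviation "Phi \<equiv> PhiL A \<omega> y lam"
abbreviation "Psi \<equiv> PsiL A \<omega> y lam"

definition primal :: "real^'m \<Rightarrow> real^'n" where
  "primal v = y - lam *\<^sub>R (transpose A *v v)"

definition dual_quad :: "real^'m \<Rightarrow> real" where
  "dual_quad v = (1/(2*lam)) * (norm (lam *\<^sub>R (transpose A *v v) - y))^2 - (1/(2*lam)) * (norm y)^2"

lemma Psi_ereal: "fconj \<omega> v = ereal c \<Longrightarrow> Psi v = ereal (dual_quad v + c)"
  unfolding PsiL_def dual_quad_def by simp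

lemma Psi_infinity: "fconj \<omega> v = \<infinity> \<Longrightarrow> Psi v = \<infinity>"
  unfolding PsiL_def by simp

lemma Phi_add_dual_quad:
  "Phi u + dual_quad w = (1/(2*lam)) * (norm (u - primal w))^2 + \<omega> (A *v u) - inner (A *v u) w"
proof -
  let ?T = "transpose A *v w"
  have expand: "(norm (u - y))^2 + (norm (lam *\<^sub>R ?T - y))^2 - (norm y)^2
      = (norm (u - primal w))^2 - 2*lam * inner u ?T"
    unfolding primal_def power2_norm_eq_inner by (simp add: inner_simps inner_commute algebra_simps)
  have "Phi u + dual_quad w
      = \<omega> (A *v u) + (1/(2*lam)) * ((norm (u - y))^2 + (norm (lam *\<^sub>R ?T - y))^2 - (norm y)^2)"
    unfolding PhiL_def dual_quad_def by (simp add: algebra_simps)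
  also have "\<dots> = \<omega> (A *v u) + (1/(2*lam)) * ((norm (u - primal w))^2 - 2*lam * inner u ?T)"
    unfolding expand ..
  also have "\<dots> = (1/(2*lam)) * (norm (u - primal w))^2 + \<omega> (A *v u) - inner (A *v u) w"
    using lam_pos unfolding inner_matrix_vector_transpose by (simp add: right_diff_distrib)
  finally show ?thesis .
qed

lemma weak_duality:
  assumes "fconj \<omega> w = ereal c"
  shows "(1/(2*lam)) * (norm (u - primal w))^2 \<le> Phi u + dual_quad w + c"
  using Phi_add_dual_quad[of u w] fenchel_young[of "A *v u" w \<omega>] assms by simp

lemma dual_quad_segment:
  "dual_quad (v + t *\<^sub>R d)
    = dual_quad v - t * inner (A *v primal v) d + t^2 * (lam/2 * (norm (transpose A *v d))^2)"
proof -
  let ?T = "transpose A *v v" and ?D = "transpose A *v d"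
  have "transpose A *v (v + t *\<^sub>R d) = ?T + t *\<^sub>R ?D"
    by (simp add: vector_matrix_left_distrib scaleR_vector_matrix_assoc)
  moreover have "(norm (lam *\<^sub>R (?T + t *\<^sub>R ?D) - y))^2
      = (norm (lam *\<^sub>R ?T - y))^2 - 2*lam*t * inner (primal v) ?D + lam^2 * t^2 * (norm ?D)^2"
    unfolding primal_def power2_norm_eq_inner
    by (simp add: inner_simps inner_commute algebra_simps power2_eq_square)
  ultimately show ?thesis
    using lam_pos unfolding dual_quad_def inner_matrix_vector_transpose
    by (simp add: field_simps power2_eq_square)
qed

context
  fixes vbar :: "real^'m"
  assumes minimizer: "\<And>w. Psi vbar \<le> Psi w"
begin

lemma minimizer_variational:
  assumes a: "fconj \<omega> vbar = ereal a" and b: "fconj \<omega> w = ereal b"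
  shows "a - inner (A *v primal vbar) vbar \<le> b - inner (A *v primal vbar) w"
proof -
  let ?x = "A *v primal vbar" and ?C = "lam/2 * (norm (transpose A *v (w - vbar)))^2"
  have "t * (a - b + inner ?x (w - vbar)) \<le> t^2 * ?C" if t: "0 < t" "t \<le> 1" for t
  proof -
    have seg: "vbar + t *\<^sub>R (w - vbar) = (1 - t) *\<^sub>R vbar + t *\<^sub>R w"
      by (simp add: algebra_simps)
    obtain c where c: "fconj \<omega> (vbar + t *\<^sub>R (w - vbar)) = ereal c" "c \<le> (1 - t) * a + t * b"
      using fconj_convex_combination[OF a b, of t] t unfolding seg[symmetric]
      by (auto elim: fconj_le_ereal_E)
    have "dual_quad vbar + a \<le> dual_quad (vbar + t *\<^sub>R (w - vbar)) + c"
      using minimizer[of "vbar + t *\<^sub>R (w - vbar)"] Psi_ereal[OF a] Psi_ereal[OF c(1)] by simp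
    then show ?thesis using c(2) unfolding dual_quad_segment by (simp add: algebra_simps)
  qed
  then have "a - b + inner ?x (w - vbar) \<le> 0" by (rule nonpos_if_mult_le_square)
  then show ?thesis by (simp add: inner_diff_right)
qed

lemma minimizer_fconj_finite: "\<exists>a. fconj \<omega> vbar = ereal a"
proof -
  obtain w0 c where "fconj \<omega> w0 \<le> ereal c"
    using fconj_biconjugate_approx[OF convex continuous zero_less_one] by blast
  then obtain c0 where "fconj \<omega> w0 = ereal c0" by (rule fconj_le_ereal_E)
  then have "Psi vbar \<noteq> \<infinity>" using minimizer[of w0] Psi_ereal by auto
  then show ?thesis
    using Psi_infinity fconj_neq_minf[of \<omega> vbar] by (cases "fconj \<omega> vbar") auto
qed

lemma minimizer_fenchel_young_eq:
  "fconj \<omega> vbar = ereal (inner (A *v primal vbar) vbar - \<omega> (A *v primal vbar))"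
proof -
  let ?x = "A *v primal vbar"
  obtain a where a: "fconj \<omega> vbar = ereal a" using minimizer_fconj_finite by blast
  have "a \<le> inner ?x vbar - \<omega> ?x"
  proof (rule field_le_epsilon)
    fix e :: real assume "0 < e"
    then obtain w where "fconj \<omega> w \<le> ereal (inner ?x w - \<omega> ?x + e)"
      using fconj_biconjugate_approx[OF convex continuous] by blast
    then obtain b where b: "fconj \<omega> w = ereal b" "b \<le> inner ?x w - \<omega> ?x + e"
      by (rule fconj_le_ereal_E)
    show "a \<le> inner ?x vbar - \<omega> ?x + e"
      using minimizer_variational[OF a b(1)] b(2) by simp
  qed
  moreover have "inner ?x vbar - \<omega> ?x \<le> a" using fenchel_young[of ?x vbar \<omega>] a by simp
  ultimately show ?thesis using a by simp
qed

lemma strong_duality: "Psi vbar = ereal (- Phi (primal vbar))"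
  using Psi_ereal[OF minimizer_fenchel_young_eq] Phi_add_dual_quad[of "primal vbar" vbar]
  by simp

lemma primal_minimizer: "Phi (primal vbar) \<le> Phi u"
proof -
  have "0 \<le> (1/(2*lam)) * (norm (u - primal vbar))^2" using lam_pos by simp
  also have "\<dots> \<le> Phi u - Phi (primal vbar)"
    using weak_duality[OF minimizer_fenchel_young_eq, of u] strong_duality
      Psi_ereal[OF minimizer_fenchel_young_eq] by simp
  finally show ?thesis by simp
qed

lemma Psi_excess_ge:
  "ereal ((1/(2*lam)) * (norm (primal w - primal vbar))^2) \<le> Psi w - Psi vbar"
proof (cases "fconj \<omega> w")
  case (real c)
  then show ?thesis
    using weak_duality[of w c "primal vbar"] Psi_ereal[of w c] strong_duality
    by (simp add: norm_minus_commute)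
qed (simp_all add: Psi_infinity strong_duality fconj_neq_minf)

lemma Phi_excess_le:
  assumes lip: "K-lipschitz_on UNIV \<omega>" and fin: "Psi w < \<infinity>"
  defines "d \<equiv> real_of_ereal (Psi w - Psi vbar)"
  shows "Phi (primal w) - Phi (primal vbar)
           \<le> sqrt d * (2 * sqrt (2*lam) * K * onorm (\<lambda>x. A *v x) + sqrt d)"
proof -
  let ?x = "A *v primal vbar" and ?\<delta> = "primal w - primal vbar" and ?nA = "onorm (\<lambda>x. A *v x)"
  have K: "K \<ge> 0" using lip by (rule lipschitz_on_nonneg)
  have gap: "(1/(2*lam)) * (norm ?\<delta>)^2 \<le> d"
    using Psi_excess_ge[of w] fin strong_duality unfolding d_def by (cases "Psi w") auto
  have "0 \<le> (1/(2*lam)) * (norm ?\<delta>)^2" using lam_pos by simp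
  then have d: "d \<ge> 0" using gap by linarith
  have A\<delta>: "A *v primal w = ?x + A *v ?\<delta>" by (simp flip: matrix_vector_right_distrib)
  have "Phi (primal w) - Phi (primal vbar)
      = (1/(2*lam)) * (norm ?\<delta>)^2 + (\<omega> (A *v primal w) - \<omega> ?x) - inner (A *v ?\<delta>) vbar"
    using Phi_add_dual_quad[of "primal w" vbar] Phi_add_dual_quad[of "primal vbar" vbar]
    unfolding A\<delta> inner_add_left by simp
  also have "\<dots> \<le> d + K * norm (A *v ?\<delta>) + norm (A *v ?\<delta>) * K"
  proof -
    have "\<omega> (A *v primal w) - \<omega> ?x \<le> K * norm (A *v ?\<delta>)"
      using lipschitz_onD[OF lip, of "A *v primal w" ?x] A\<delta> by (simp add: dist_norm dist_real_def)
    moreover have "- inner (A *v ?\<delta>) vbar \<le> norm (A *v ?\<delta>) * norm vbar"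
      using Cauchy_Schwarz_ineq2[of "A *v ?\<delta>" vbar] by linarith
    moreover have "norm vbar \<le> K"
      by (rule lipschitz_subgradient_norm_le[OF lip
            fconj_eq_imp_subgradient[OF minimizer_fenchel_young_eq]])
    then have "norm (A *v ?\<delta>) * norm vbar \<le> norm (A *v ?\<delta>) * K" by (simp add: mult_left_mono)
    ultimately show ?thesis using gap by linarith
  qed
  also have "\<dots> \<le> d + 2 * K * (?nA * (sqrt (2*lam) * sqrt d))"
  proof -
    have "(norm ?\<delta>)^2 \<le> 2*lam*d" using gap lam_pos by (simp add: field_simps)
    then have "norm ?\<delta> \<le> sqrt (2*lam*d)" by (rule real_le_rsqrt)
    then have "norm ?\<delta> \<le> sqrt (2*lam) * sqrt d" by (simp only: real_sqrt_mult)
    moreover have "norm (A *v ?\<delta>) \<le> ?nA * norm ?\<delta>" by (rule onorm) simp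
    moreover have "?nA \<ge> 0" by (rule onorm_pos_le) simp
    ultimately have "norm (A *v ?\<delta>) \<le> ?nA * (sqrt (2*lam) * sqrt d)"
      by (meson mult_left_mono order_trans)
    then show ?thesis using K by (simp add: mult_left_mono)
  qed
  also have "\<dots> = sqrt d * (2 * sqrt (2*lam) * K * ?nA + sqrt d)"
    using d by (simp add: algebra_simps)
  finally show ?thesis .
qed

end

end

theorem theorem2p21:
  fixes A :: "real^'n^'m" and \<omega> :: "real^'m \<Rightarrow> real" and K :: real
    and y :: "real^'n" and lam :: real and vbar :: "real^'m" and v :: "nat \<Rightarrow> real^'m"
  assumes conv: "convex_on UNIV \<omega>"
    and lip: "K-lipschitz_on UNIV \<omega>"
    and lam: "lam > 0"
    and vmin: "\<forall>w. PsiL A \<omega> y lam vbar \<le> PsiL A \<omega> y lam w"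
    and lim: "(\<lambda>j. PsiL A \<omega> y lam (v j)) \<longlonglongrightarrow> PsiL A \<omega> y lam vbar"
  shows "(\<forall>u. PhiL A \<omega> y lam (y - lam *\<^sub>R (transpose A *v vbar)) \<le> PhiL A \<omega> y lam u)
    \<and> (\<forall>j. PsiL A \<omega> y lam (v j) - PsiL A \<omega> y lam vbar \<ge>
           ereal ((1 / (2*lam)) * (norm ((y - lam *\<^sub>R (transpose A *v v j))
                                          - (y - lam *\<^sub>R (transpose A *v vbar))))^2))
    \<and> ((\<lambda>j. y - lam *\<^sub>R (transpose A *v v j)) \<longlonglongrightarrow> y - lam *\<^sub>R (transpose A *v vbar))
    \<and> (\<forall>j. PsiL A \<omega> y lam (v j) < \<infinity> \<longrightarrow>
         (let d = real_of_ereal (PsiL A \<omega> y lam (v j) - PsiL A \<omega> y lam vbar) in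
          PhiL A \<omega> y lam (y - lam *\<^sub>R (transpose A *v v j))
            - PhiL A \<omega> y lam (y - lam *\<^sub>R (transpose A *v vbar))
          \<le> sqrt d * (2 * sqrt (2*lam) * K * onorm (\<lambda>x. A *v x) + sqrt d)))"
proof -
  interpret prox_duality A \<omega> y lam
    using conv lipschitz_on_continuous_on[OF lip] lam by unfold_locales
  have minimizer: "\<And>w. Psi vbar \<le> Psi w" using vmin by blast
  have "(\<lambda>j. primal (v j)) \<longlonglongrightarrow> primal vbar"
    using lim strong_duality[OF minimizer] Psi_excess_ge[OF minimizer] lam
    by (intro LIMSEQ_if_ereal_excess_ge_square[where c = "1/(2*lam)"]) auto
  then show ?thesis
    using primal_minimizer[OF minimizer] Psi_excess_ge[OF minimizer] Phi_excess_le[OF minimizer lip]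
    unfolding primal_def Let_def by blast
qed

end
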